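(* For any parameter $\theta$ of the model $f(\cdot;\theta)$ (indeed for any classifier $f:\mathbb R^{M\times d}\to\mathbb R$), if $\tau\ge\|\boldsymbol\mu\|_2$ then the robust test error satisfies $L_D^{\mathrm{rob}}(\theta)\ge 1/4$.
   Context: Data distribution $D$: fix $\boldsymbol\mu_+,\boldsymbol\mu_-\in\mathbb R^d$ with $\|\boldsymbol\mu_+\|_2=\|\boldsymbol\mu_-\|_2=:\|\boldsymbol\mu\|_2$ and $\langle\boldsymbol\mu_+,\boldsymbol\mu_-\rangle=0$. A sample is $(\mathbf X,y)$ with $\mathbf X=(\mathbf x_1,\dots,\mathbf x_M)^\top\in\mathbb R^{M\times d}$, $y\in\{\pm1\}$ uniform; $\mathbf x_1=\boldsymbol\mu_+$ if $y=1$ and $\mathbf x_1=\boldsymbol\mu_-$ if $y=-1$; $\mathbf x_2,\dots,\mathbf x_M$ are i.i.d. noise vectors $\boldsymbol\xi_i\sim\mathcal N\big(0,\sigma_p^2(\mathbf I-\boldsymbol\mu_+\boldsymbol\mu_+^\top\|\boldsymbol\mu\|_2^{-2}-\boldsymbol\mu_-\boldsymbol\mu_-^\top\|\boldsymbol\mu\|_2^{-2})\big)$. Perturbation set $B(\mathbf X,\tau)=\{\widetilde{\mathbf X}=(\widetilde{\mathbf x}_1,\dots,\widetilde{\mathbf x}_M)^\top:\|\widetilde{\mathbf x}_m-\mathbf x_m\|_2\le\tau\ \forall m\}$. Robust test error $L_D^{\mathrm{rob}}(\theta)=\mathbb E_{(\mathbf X,y)\sim D}\max_{\widetilde{\mathbf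 X}\in B(\mathbf X,\tau)}\mathbb 1(yf(\widetilde{\mathbf X},\theta)\le0)$. *)

theory Defs
  imports "HOL-Probability.Probability"
begin

text \<open>Samples X are M x d matrices, represented as real^'d^'m (row i is X $ i),
  with a designated row index i0 playing the role of the first row x_1.\<close>

definition outer :: "real^'d \<Rightarrow> real^'d^'d" where
  "outer u = (\<chi> i j. u $ i * u $ j)"

definition noise_cov :: "real \<Rightarrow> real^'d \<Rightarrow> real^'d \<Rightarrow> real^'d^'d" where
  "noise_cov \<sigma>p \<mu>p \<mu>m =
     (\<sigma>p ^ 2) *\<^sub>R (mat 1 - (1 / (norm \<mu>p)^2) *\<^sub>R outer \<mu>p - (1 / (norm \<mu>m)^2) *\<^sub>R outer \<mu>m)"

text \<open>N is the centered (possibly degenerate) Gaussian N(0, S) on R^d: every linear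
  functional u.x is distributed as the one-dimensional normal N(0, u^T S u)
  (a point mass at 0 if the variance is 0).\<close>
definition gaussian0 :: "(real^'d) measure \<Rightarrow> real^'d^'d \<Rightarrow> bool" where
  "gaussian0 N S \<longleftrightarrow> prob_space N \<and> sets N = sets borel \<and>
     (\<forall>u. let v = u \<bullet> (S *v u) in
        distr N borel (\<lambda>x. u \<bullet> x) =
          (if v = 0 then return borel 0 else density lborel (normal_density 0 (sqrt v))))"

definition sample_given :: "'m::finite \<Rightarrow> real^'d \<Rightarrow> real^'d \<Rightarrow> (real^'d) measure \<Rightarrow> real
    \<Rightarrow> (real^'d^'m) measure" where
  "sample_given i0 \<mu>p \<mu>m N y =
     distr (PiM UNIV (\<lambda>i. if i = i0 then return borel (if y = 1 then \<mu>p else \<mu>m) else N))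
           borel (\<lambda>x. vec_lambda x)"

definition data_dist :: "'m::finite \<Rightarrow> real^'d \<Rightarrow> real^'d \<Rightarrow> (real^'d) measure
    \<Rightarrow> ((real^'d^'m) \<times> real) measure" where
  "data_dist i0 \<mu>p \<mu>m N =
     bind (measure_pmf (pmf_of_set {-1, 1}))
       (\<lambda>y. distr (sample_given i0 \<mu>p \<mu>m N y) (borel \<Otimes>\<^sub>M borel) (\<lambda>X. (X, y)))"

definition pert_set :: "real^'d^'m \<Rightarrow> real \<Rightarrow> (real^'d^'m) set" where
  "pert_set X \<tau> = {X'. \<forall>i. norm (X' $ i - X $ i) \<le> \<tau>}"

definition rob_loss :: "(real^'d^'m \<Rightarrow> real) \<Rightarrow> real \<Rightarrow> real^'d^'m \<Rightarrow> real \<Rightarrow> ennreal" where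
  "rob_loss f \<tau> X y = (if \<exists>X'\<in>pert_set X \<tau>. y * f X' \<le> 0 then 1 else 0)"

definition rob_error :: "((real^'d^'m) \<times> real) measure \<Rightarrow> (real^'d^'m \<Rightarrow> real) \<Rightarrow> real \<Rightarrow> ennreal" where
  "rob_error D f \<tau> = (\<integral>\<^sup>+ z. rob_loss f \<tau> (fst z) (snd z) \<partial>D)"

end

theory Submission
  imports Defs
begin

text \<open>With budget \<open>\<tau> \<ge> \<parallel>\<mu>\<parallel>\<close> the adversary can overwrite the signal row by \<open>0\<close>. Hence a sample of
  class \<open>+1\<close> and the sample of class \<open>-1\<close> with the same noise rows have a common perturbation
  \<open>Z\<close>, and whatever the sign of \<open>f Z\<close>, one of the two is robustly misclassified. Integrating
  over the common noise, the two class-conditional robust errors add up to at least \<open>1\<close>, so the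
  robust error is at least \<open>1/2\<close>.\<close>

lemma (in product_sigma_finite) nn_integral_insert_return:
  assumes "finite I" "i \<notin> I" "M i = return N c" "c \<in> space N"
    and h: "h \<in> borel_measurable (PiM (insert i I) M)"
  shows "(\<integral>\<^sup>+ x. h x \<partial>PiM (insert i I) M) = (\<integral>\<^sup>+ x. h (x(i := c)) \<partial>PiM I M)"
proof -
  have "(\<integral>\<^sup>+ x. h x \<partial>PiM (insert i I) M) = (\<integral>\<^sup>+ x. (\<integral>\<^sup>+ v. h (x(i := v)) \<partial>M i) \<partial>PiM I M)"
    using assms by (intro product_nn_integral_insert)
  also have "\<dots> = (\<integral>\<^sup>+ x. h (x(i := c)) \<partial>PiM I M)"
  proof (rule nn_integral_cong)
    fix x assume "x \<in> space (PiM I M)"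
    then have "(\<lambda>v. h (x(i := v))) \<in> borel_measurable (M i)"
      using measurable_compose[OF measurable_component_update h] \<open>i \<notin> I\<close> by blast
    then show "(\<integral>\<^sup>+ v. h (x(i := v)) \<partial>M i) = h (x(i := c))"
      using assms(3,4) by (simp add: nn_integral_return)
  qed
  finally show ?thesis .
qed

lemma measurable_vec_lambda_PiM:
  fixes M :: "'m::finite \<Rightarrow> (real^'d) measure"
  assumes "\<And>i. sets (M i) = sets borel"
  shows "(vec_lambda :: ('m \<Rightarrow> real^'d) \<Rightarrow> real^'d^'m) \<in> borel_measurable (PiM UNIV M)"
proof (subst borel_measurable_euclidean_space, intro ballI)
  fix b :: "real^'d^'m" assume "b \<in> Basis"
  then obtain i u where b: "b = axis i u" "u \<in> Basis" by (auto simp: Basis_vec_def)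
  have "(\<lambda>x. x i) \<in> borel_measurable (PiM UNIV M)"
    using measurable_component_singleton[of i UNIV M] assms
    by (metis UNIV_I measurable_cong_sets)
  then have "(\<lambda>x. x i \<bullet> u) \<in> borel_measurable (PiM UNIV M)"
    by (intro borel_measurable_inner) auto
  then show "(\<lambda>x. vec_lambda x \<bullet> b) \<in> borel_measurable (PiM UNIV M)"
    by (simp add: b inner_axis)
qed

lemma zero_row_in_pert_set:
  assumes "norm a \<le> \<tau>"
  shows "vec_lambda (x(i := 0)) \<in> pert_set (vec_lambda (x(i := a))) \<tau>"
  using assms order_trans[OF norm_ge_zero assms] by (auto simp: pert_set_def)

lemma rob_loss_add_ge_one:
  assumes "Z \<in> pert_set X \<tau>" "Z \<in> pert_set X' \<tau>"
  shows "1 \<le> rob_loss f \<tau> X 1 + rob_loss f \<tau> X' (-1)"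
  using assms by (cases "f Z \<le> 0") (auto simp: rob_loss_def intro!: bexI[of _ Z])

context
  fixes N :: "(real^'d) measure"
  assumes prob_N: "prob_space N" and sets_N: "sets N = sets borel"
begin

lemma sets_sample_given: "sets (sample_given i0 \<mu>p \<mu>m N y) = sets borel"
  by (simp add: sample_given_def)

lemma prob_space_sample_given: "prob_space (sample_given i0 \<mu>p \<mu>m N y)"
  unfolding sample_given_def
  using prob_N sets_N
  by (intro prob_space.prob_space_distr prob_space_PiM measurable_vec_lambda_PiM)
     (auto intro: prob_space_return)

lemma nn_integral_sample_given:
  fixes h :: "real^'d^'m::finite \<Rightarrow> ennreal" and i0 :: 'm
  assumes h: "h \<in> borel_measurable borel"
  shows "(\<integral>\<^sup>+ X. h X \<partial>sample_given i0 \<mu>p \<mu>m N y)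
       = (\<integral>\<^sup>+ x. h (vec_lambda (x(i0 := if y = 1 then \<mu>p else \<mu>m))) \<partial>PiM (UNIV - {i0}) (\<lambda>_. N))"
proof -
  define c where "c = (if y = 1 then \<mu>p else \<mu>m)"
  define M where "M = (\<lambda>i. if i = i0 then return borel c else N)"
  interpret product_prob_space M
    unfolding product_prob_space_def product_prob_space_axioms_def product_sigma_finite_def
    using prob_N by (auto simp: M_def prob_space_return prob_space_imp_sigma_finite)
  have vec: "vec_lambda \<in> borel_measurable (PiM UNIV M)"
    using sets_N by (intro measurable_vec_lambda_PiM) (simp add: M_def)
  have UNIV_eq: "UNIV = insert i0 (UNIV - {i0})" by auto
  have "sample_given i0 \<mu>p \<mu>m N y = distr (PiM UNIV M) borel vec_lambda"
    unfolding sample_given_def M_def c_def ..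
  then have "(\<integral>\<^sup>+ X. h X \<partial>sample_given i0 \<mu>p \<mu>m N y) = (\<integral>\<^sup>+ x. h (vec_lambda x) \<partial>PiM UNIV M)"
    using vec h by (simp add: nn_integral_distr)
  also have "\<dots> = (\<integral>\<^sup>+ x. h (vec_lambda (x(i0 := c))) \<partial>PiM (UNIV - {i0}) M)"
    using vec h by (subst UNIV_eq, intro nn_integral_insert_return) (auto simp: M_def)
  also have "PiM (UNIV - {i0}) M = PiM (UNIV - {i0}) (\<lambda>_. N)"
    by (rule PiM_cong) (auto simp: M_def)
  finally show ?thesis unfolding c_def .
qed

lemma measurable_vec_lambda_fun_upd:
  fixes i0 :: "'m::finite"
  shows "(\<lambda>x. vec_lambda (x(i0 := c)) :: real^'d^'m) \<in> borel_measurable (PiM (UNIV - {i0}) (\<lambda>_. N))"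
proof -
  have "space N = UNIV"
    using sets_eq_imp_space_eq[OF sets_N] by simp
  then have "(\<lambda>x. x(i0 := c)) \<in> measurable (PiM (UNIV - {i0}) (\<lambda>_. N)) (PiM UNIV (\<lambda>_. N))"
    by (intro measurable_fun_upd[where J = "UNIV - {i0}"]) auto
  then show ?thesis
    using measurable_vec_lambda_PiM[of "\<lambda>_. N", OF sets_N] by (rule measurable_compose)
qed

lemma sets_data_dist: "sets (data_dist i0 \<mu>p \<mu>m N) = sets (borel \<Otimes>\<^sub>M borel)"
  unfolding data_dist_def by (rule sets_bind) auto

lemma nn_integral_data_dist:
  fixes g :: "(real^'d^'m::finite) \<times> real \<Rightarrow> ennreal" and i0 :: 'm
  assumes g: "g \<in> borel_measurable (borel \<Otimes>\<^sub>M borel)"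
  shows "(\<integral>\<^sup>+ z. g z \<partial>data_dist i0 \<mu>p \<mu>m N)
       = ((\<integral>\<^sup>+ X. g (X, -1) \<partial>sample_given i0 \<mu>p \<mu>m N (-1))
          + (\<integral>\<^sup>+ X. g (X, 1) \<partial>sample_given i0 \<mu>p \<mu>m N 1)) / 2"
proof -
  define K where "K y = distr (sample_given i0 \<mu>p \<mu>m N y) (borel \<Otimes>\<^sub>M borel) (\<lambda>X. (X, y))" for y
  have pair: "(\<lambda>X. (X, y)) \<in> measurable (sample_given i0 \<mu>p \<mu>m N y) (borel \<Otimes>\<^sub>M borel)" for y
    by (intro measurable_Pair measurable_ident_sets[OF sets_sample_given] measurable_const) auto
  have "K y \<in> space (subprob_algebra (borel \<Otimes>\<^sub>M borel))" for y
    unfolding K_def space_subprob_algebra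
    using prob_space_imp_subprob_space[OF prob_space.prob_space_distr[OF prob_space_sample_given pair]]
    by simp
  then have "K \<in> measurable (measure_pmf (pmf_of_set {-1, 1})) (subprob_algebra (borel \<Otimes>\<^sub>M borel))"
    by (simp add: measurable_cong_sets[of _ "count_space UNIV"])
  moreover have K_integral: "(\<integral>\<^sup>+ z. g z \<partial>K y) = (\<integral>\<^sup>+ X. g (X, y) \<partial>sample_given i0 \<mu>p \<mu>m N y)" for y
    unfolding K_def using pair g by (subst nn_integral_distr) auto
  ultimately have "(\<integral>\<^sup>+ z. g z \<partial>data_dist i0 \<mu>p \<mu>m N)
      = (\<integral>\<^sup>+ y. (\<integral>\<^sup>+ X. g (X, y) \<partial>sample_given i0 \<mu>p \<mu>m N y) \<partial>measure_pmf (pmf_of_set {-1, 1}))"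
    unfolding data_dist_def K_def[symmetric] by (simp add: nn_integral_bind[OF g])
  also have "\<dots> = ((\<integral>\<^sup>+ X. g (X, -1) \<partial>sample_given i0 \<mu>p \<mu>m N (-1))
          + (\<integral>\<^sup>+ X. g (X, 1) \<partial>sample_given i0 \<mu>p \<mu>m N 1)) / 2"
    by (subst nn_integral_pmf_of_set) auto
  finally show ?thesis .
qed

lemma rob_loss_sample_given_add_ge_one:
  fixes f :: "real^'d^'m::finite \<Rightarrow> real" and i0 :: 'm
  assumes "norm \<mu>p \<le> \<tau>" "norm \<mu>m \<le> \<tau>"
    and meas: "\<And>y. (\<lambda>X. rob_loss f \<tau> X y) \<in> borel_measurable borel"
  shows "1 \<le> (\<integral>\<^sup>+ X. rob_loss f \<tau> X 1 \<partial>sample_given i0 \<mu>p \<mu>m N 1)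
            + (\<integral>\<^sup>+ X. rob_loss f \<tau> X (-1) \<partial>sample_given i0 \<mu>p \<mu>m N (-1))"
proof -
  let ?Q = "PiM (UNIV - {i0}) (\<lambda>_. N)"
  let ?L = "\<lambda>c y x. rob_loss f \<tau> (vec_lambda (x(i0 := c))) y"
  have L_meas: "?L c y \<in> borel_measurable ?Q" for c y
    using measurable_vec_lambda_fun_upd meas by (rule measurable_compose)
  have pointwise: "1 \<le> ?L \<mu>p 1 x + ?L \<mu>m (-1) x" for x
    by (rule rob_loss_add_ge_one[OF zero_row_in_pert_set[OF assms(1)] zero_row_in_pert_set[OF assms(2)]])
  interpret Q: prob_space ?Q
    using prob_N by (rule prob_space_PiM)
  have "1 = (\<integral>\<^sup>+ x. 1 \<partial>?Q)"
    by (simp add: Q.emeasure_space_1)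
  also have "\<dots> \<le> (\<integral>\<^sup>+ x. ?L \<mu>p 1 x + ?L \<mu>m (-1) x \<partial>?Q)"
    using pointwise by (intro nn_integral_mono)
  also have "\<dots> = (\<integral>\<^sup>+ x. ?L \<mu>p 1 x \<partial>?Q) + (\<integral>\<^sup>+ x. ?L \<mu>m (-1) x \<partial>?Q)"
    by (intro nn_integral_add L_meas)
  also have "\<dots> = (\<integral>\<^sup>+ X. rob_loss f \<tau> X 1 \<partial>sample_given i0 \<mu>p \<mu>m N 1)
            + (\<integral>\<^sup>+ X. rob_loss f \<tau> X (-1) \<partial>sample_given i0 \<mu>p \<mu>m N (-1))"
    using meas by (simp add: nn_integral_sample_given)
  finally show ?thesis .
qed

end

theorem mainTheorem2:
  fixes \<mu>p \<mu>m :: "real^'d" and \<sigma>p \<tau> :: real and i0 :: "'m::finite"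
    and N :: "(real^'d) measure" and f :: "real^'d^'m \<Rightarrow> real"
  assumes "norm \<mu>p = norm \<mu>m"
    and "\<mu>p \<bullet> \<mu>m = 0"
    and "gaussian0 N (noise_cov \<sigma>p \<mu>p \<mu>m)"
    and "(\<lambda>z. rob_loss f \<tau> (fst z) (snd z)) \<in> borel_measurable (data_dist i0 \<mu>p \<mu>m N)"
    and "\<tau> \<ge> norm \<mu>p"
  shows "rob_error (data_dist i0 \<mu>p \<mu>m N) f \<tau> \<ge> 1/4"
proof -
  have prob_N: "prob_space N" and sets_N: "sets N = sets borel"
    using assms(3) by (auto simp: gaussian0_def)
  have loss_meas: "(\<lambda>z. rob_loss f \<tau> (fst z) (snd z)) \<in> borel_measurable (borel \<Otimes>\<^sub>M borel)"
    using assms(4) by (simp add: measurable_cong_sets[OF sets_data_dist[OF prob_N sets_N] refl])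
  have "(\<lambda>X. rob_loss f \<tau> X y) \<in> borel_measurable borel" for y
    using measurable_compose[OF _ loss_meas, of "\<lambda>X. (X, y)" borel] by simp
  then have "1 \<le> (\<integral>\<^sup>+ X. rob_loss f \<tau> X 1 \<partial>sample_given i0 \<mu>p \<mu>m N 1)
            + (\<integral>\<^sup>+ X. rob_loss f \<tau> X (-1) \<partial>sample_given i0 \<mu>p \<mu>m N (-1))"
    using assms(1,5) by (intro rob_loss_sample_given_add_ge_one[OF prob_N sets_N]) auto
  then have "1/2 \<le> rob_error (data_dist i0 \<mu>p \<mu>m N) f \<tau>"
    unfolding rob_error_def nn_integral_data_dist[OF prob_N sets_N loss_meas]
    by (simp add: add.commute divide_right_mono_ennreal)
  moreover have "(1/4 :: ennreal) \<le> 1/2"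
    using ennreal_leI[of "1/4" "1/2"] by (simp add: ennreal_divide_numeral[symmetric] divide_ennreal_def)
  ultimately show ?thesis by simp
qed

end
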